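(* Let $F$ be a field with $\mathrm{char}\,F\ne2$ and let $A$ be an involutive $F$-algebra. Then $A$ is reversible if and only if every $3$-dimensional subalgebra of $A$ is commutative.
   Context: Algebras are unital, with bilinear not necessarily associative multiplication. $A$ is involutive if there is an anti-automorphism $a\mapsto\bar a$ with $\bar{\bar a}=a$, $a+\bar a\in F1$ and $a\bar a\in F1$ for all $a\in A$. $A$ is reversible if $ab=0$ implies $ba=0$ for all $a,b\in A$. *)

theory Defs
  imports Complex_Main
begin

definition unital_algebra ::
  "('k::field \<Rightarrow> 'a::ab_group_add \<Rightarrow> 'a) \<Rightarrow> ('a \<Rightarrow> 'a \<Rightarrow> 'a) \<Rightarrow> 'a \<Rightarrow> bool" where
  "unital_algebra scale mult one \<longleftrightarrow>
     Vector_Spaces.vector_space scale \<and>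
     (\<forall>x y z. mult (x + y) z = mult x z + mult y z) \<and>
     (\<forall>x y z. mult x (y + z) = mult x y + mult x z) \<and>
     (\<forall>c x y. mult (scale c x) y = scale c (mult x y)) \<and>
     (\<forall>c x y. mult x (scale c y) = scale c (mult x y)) \<and>
     (\<forall>x. mult one x = x \<and> mult x one = x)"

definition is_involution ::
  "('k::field \<Rightarrow> 'a::ab_group_add \<Rightarrow> 'a) \<Rightarrow> ('a \<Rightarrow> 'a \<Rightarrow> 'a) \<Rightarrow> 'a \<Rightarrow> ('a \<Rightarrow> 'a) \<Rightarrow> bool" where
  "is_involution scale mult one bar \<longleftrightarrow>
     (\<forall>x y. bar (x + y) = bar x + bar y) \<and>
     (\<forall>c x. bar (scale c x) = scale c (bar x)) \<and>
     bij bar \<and>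
     (\<forall>x y. bar (mult x y) = mult (bar y) (bar x)) \<and>
     (\<forall>x. bar (bar x) = x) \<and>
     (\<forall>x. \<exists>c. x + bar x = scale c one) \<and>
     (\<forall>x. \<exists>c. mult x (bar x) = scale c one)"

definition involutive_algebra ::
  "('k::field \<Rightarrow> 'a::ab_group_add \<Rightarrow> 'a) \<Rightarrow> ('a \<Rightarrow> 'a \<Rightarrow> 'a) \<Rightarrow> 'a \<Rightarrow> bool" where
  "involutive_algebra scale mult one \<longleftrightarrow>
     unital_algebra scale mult one \<and> (\<exists>bar. is_involution scale mult one bar)"

definition reversible :: "('a::zero \<Rightarrow> 'a \<Rightarrow> 'a) \<Rightarrow> bool" where
  "reversible mult \<longleftrightarrow> (\<forall>a b. mult a b = 0 \<longrightarrow> mult b a = 0)"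

definition subalgebra ::
  "('k::field \<Rightarrow> 'a::ab_group_add \<Rightarrow> 'a) \<Rightarrow> ('a \<Rightarrow> 'a \<Rightarrow> 'a) \<Rightarrow> 'a \<Rightarrow> 'a set \<Rightarrow> bool" where
  "subalgebra scale mult one B \<longleftrightarrow>
     Modules.module.subspace scale B \<and> one \<in> B \<and> (\<forall>x\<in>B. \<forall>y\<in>B. mult x y \<in> B)"

definition commutative_on :: "('a \<Rightarrow> 'a \<Rightarrow> 'a) \<Rightarrow> 'a set \<Rightarrow> bool" where
  "commutative_on mult B \<longleftrightarrow> (\<forall>x\<in>B. \<forall>y\<in>B. mult x y = mult y x)"

end

theory Submission
  imports Defs
begin

text \<open>
  The involution forces every element to satisfy a quadratic equation
  \<open>x\<^sup>2 = t x - n 1\<close> with \<open>t, n \<in> F\<close>. Polarizing it shows \<open>ab + ba \<in> span {1, a, b}\<close>, so when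
  \<open>ab = 0\<close> and \<open>1, a, b\<close> are independent, \<open>span {1, a, b}\<close> is a 3-dimensional subalgebra;
  its commutativity gives \<open>ba = ab = 0\<close>.

  Conversely, in a 3-dimensional subalgebra subtract scalars so that \<open>x, y\<close> are skew.
  Then \<open>x\<^sup>2 = A\<close>, \<open>y\<^sup>2 = B\<close> are scalars and, writing \<open>xy = \<alpha> + \<beta>x + \<gamma>y\<close>, the involution gives
  \<open>yx = \<alpha> - \<beta>x - \<gamma>y\<close>. The binary form \<open>(A - \<gamma>\<^sup>2)pr + (\<alpha> + \<beta>\<gamma>)(pt + qr) + (B - \<beta>\<^sup>2)qt\<close>
  has an orthogonal pair with \<open>pt - qr \<noteq> 0\<close> (here \<open>char F \<noteq> 2\<close> is used), and for it
  \<open>u = (\<beta>q - \<gamma>p) + px + qy\<close>, \<open>v = (\<gamma>r - \<beta>t) + rx + ty\<close> satisfy \<open>uv = 0\<close>. Reversibility gives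
  \<open>vu = 0\<close>, while \<open>vu = uv - 2(pt - qr)(\<beta>x + \<gamma>y)\<close>; hence \<open>\<beta>x + \<gamma>y = 0\<close> and \<open>xy = yx\<close>.
\<close>

lemma binary_form_orthogonal_pair:
  fixes P Q R :: "'k::field"
  assumes two: "(2::'k) \<noteq> 0"
  shows "\<exists>p q r t. P*p*r + Q*(p*t + q*r) + R*q*t = 0 \<and> p*t - q*r \<noteq> 0"
proof -
  consider "P \<noteq> 0" | "R \<noteq> 0" | "P = 0" "R = 0" by blast
  then show ?thesis
  proof cases
    case 1
    then show ?thesis
      by (intro exI[of _ 1] exI[of _ 0] exI[of _ "- Q"] exI[of _ P]) (simp add: algebra_simps)
  next
    case 2
    then show ?thesis
      by (intro exI[of _ 0] exI[of _ 1] exI[of _ R] exI[of _ "- Q"]) (simp add: algebra_simps)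
  next
    case 3
    then show ?thesis
      using two by (intro exI[of _ 1] exI[of _ 1] exI[of _ 1] exI[of _ "- 1"]) simp
  qed
qed

text \<open>The hypothesis \<open>card S \<noteq> 0\<close> excludes infinite-dimensional \<open>V\<close>, whose \<open>dim\<close> is the
  junk value 0.\<close>
lemma (in vector_space) subset_span_if_card_eq_dim:
  assumes SV: "S \<subseteq> V" and indep: "independent S" and card: "card S = dim V" and "card S \<noteq> 0"
  shows "V \<subseteq> span S"
proof
  fix z assume "z \<in> V"
  show "z \<in> span S"
  proof (rule ccontr)
    assume z: "z \<notin> span S"
    obtain T where "T \<subseteq> V" "V \<subseteq> span T" "card T = dim V"
      by (rule basis_exists)
    have "finite T"
      using card \<open>card S \<noteq> 0\<close> \<open>card T = dim V\<close> by (metis card.infinite)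
    moreover have "insert z S \<subseteq> span T"
      using SV \<open>z \<in> V\<close> \<open>V \<subseteq> span T\<close> by blast
    moreover have "independent (insert z S)"
      using z indep by (rule independent_insertI)
    ultimately have "card (insert z S) \<le> card T"
      using independent_span_bound by simp
    moreover have "card (insert z S) = Suc (card S)"
    proof (rule card_insert_disjoint)
      show "finite S" using \<open>card S \<noteq> 0\<close> by (metis card.infinite)
      show "z \<notin> S" using z span_base by blast
    qed
    ultimately show False
      using card \<open>card T = dim V\<close> by simp
  qed
qed

locale unital_alg = vector_space scale
  for scale :: "'k::field \<Rightarrow> 'a::ab_group_add \<Rightarrow> 'a" (infixr "*s" 75) +
  fixes mult :: "'a \<Rightarrow> 'a \<Rightarrow> 'a" (infixl "\<odot>" 70) and one :: 'a
  assumes mult_add_left: "(x + y) \<odot> z = x \<odot> z + y \<odot> z"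
    and mult_add_right: "x \<odot> (y + z) = x \<odot> y + x \<odot> z"
    and mult_scale_left: "(c *s x) \<odot> y = c *s (x \<odot> y)"
    and mult_scale_right: "x \<odot> (c *s y) = c *s (x \<odot> y)"
    and one_mult: "one \<odot> x = x"
    and mult_one: "x \<odot> one = x"
begin

lemma mult_zero_left [simp]: "0 \<odot> y = 0"
  using mult_add_left[of 0 0 y] by simp

lemma mult_zero_right [simp]: "y \<odot> 0 = 0"
  using mult_add_right[of y 0 0] by simp

lemma mult_minus_left: "(- x) \<odot> y = - (x \<odot> y)"
  using mult_add_left[of x "- x" y] by (simp add: minus_unique)

lemma mult_minus_right: "y \<odot> (- x) = - (y \<odot> x)"
  using mult_add_right[of y x "- x"] by (simp add: minus_unique)

lemma mult_diff_left: "(x - z) \<odot> y = x \<odot> y - z \<odot> y"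
  by (simp only: diff_conv_add_uminus mult_add_left mult_minus_left)

lemma mult_diff_right: "y \<odot> (x - z) = y \<odot> x - y \<odot> z"
  by (simp only: diff_conv_add_uminus mult_add_right mult_minus_right)

lemmas bilinear_simps = mult_add_left mult_add_right mult_scale_left mult_scale_right
  one_mult mult_one mult_diff_left mult_diff_right

lemma trivial_if_one_eq_zero: "one = 0 \<Longrightarrow> x = (0::'a)"
  using one_mult[of x] by simp

lemma mult_commute_add_scalars:
  "x \<odot> y = y \<odot> x \<Longrightarrow> (c *s one + x) \<odot> (d *s one + y) = (d *s one + y) \<odot> (c *s one + x)"
  by (simp add: bilinear_simps algebra_simps)

lemma span_mult_closed:
  assumes gen: "\<forall>e\<in>G. \<forall>f\<in>G. e \<odot> f \<in> span G"
    and u: "u \<in> span G" and v: "v \<in> span G"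
  shows "u \<odot> v \<in> span G"
  using u
proof (induction rule: span_induct_alt)
  case base
  then show ?case by (simp add: span_zero)
next
  case (step c e w)
  have "e \<odot> v \<in> span G"
    using v
  proof (induction rule: span_induct_alt)
    case base
    then show ?case by (simp add: span_zero)
  next
    case (step c' f w')
    then show ?case using gen \<open>e \<in> G\<close> by (simp add: bilinear_simps span_add span_scale)
  qed
  then show ?case using step by (simp add: bilinear_simps span_add span_scale)
qed

lemma span_one_elem_decomp: "u \<in> span {one, z} \<Longrightarrow> \<exists>a b. u = a *s one + b *s z"
  by (auto simp: span_insert span_singleton algebra_simps)

lemma mult_commute_span_one:
  assumes "u \<in> span {one, z}" and "v \<in> span {one, z}"
  shows "u \<odot> v = v \<odot> u"
proof -
  obtain a b c d where "u = a *s one + b *s z" and "v = c *s one + d *s z"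
    using assms span_one_elem_decomp by metis
  then show ?thesis by (simp add: bilinear_simps algebra_simps)
qed

lemma mult_commute_if_dependent:
  assumes "x \<in> span {one} \<or> y \<in> span {one, x}"
  shows "x \<odot> y = y \<odot> x"
  using assms
proof
  assume "x \<in> span {one}"
  then have "x \<in> span {one, y}" using span_mono[of "{one}" "{one, y}"] by auto
  then show ?thesis by (rule mult_commute_span_one) (simp add: span_base)
qed (simp add: mult_commute_span_one span_base)

lemma independent_one_pair:
  assumes x: "x \<notin> span {one}" and y: "y \<notin> span {one, x}"
  shows "independent {one, x, y}" and "card {one, x, y} = 3"
proof -
  have "one \<noteq> 0"
    using x trivial_if_one_eq_zero span_zero by metis
  then have "independent {one}" by (simp add: independent_insertI)
  then have "independent {x, one}" by (rule independent_insertI[OF x])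
  moreover have "y \<notin> span {x, one}" using y by (simp add: insert_commute)
  ultimately have "independent {y, x, one}" by (rule independent_insertI[rotated])
  then show "independent {one, x, y}" by (simp add: insert_commute)
  have "x \<noteq> one" "y \<noteq> x" "y \<noteq> one" using x y by (auto intro: span_base)
  then show "card {one, x, y} = 3" by simp
qed

definition lincomb :: "'a \<Rightarrow> 'a \<Rightarrow> 'k \<Rightarrow> 'k \<Rightarrow> 'k \<Rightarrow> 'a" where
  "lincomb x y a b c = a *s one + b *s x + c *s y"

lemma lincomb_add:
  "lincomb x y a b c + lincomb x y a' b' c' = lincomb x y (a + a') (b + b') (c + c')"
  by (simp add: lincomb_def scale_left_distrib add_ac)

lemma lincomb_scale: "k *s lincomb x y a b c = lincomb x y (k * a) (k * b) (k * c)"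
  by (simp add: lincomb_def scale_right_distrib)

lemma lincomb_cong:
  "a = a' \<Longrightarrow> b = b' \<Longrightarrow> c = c' \<Longrightarrow> lincomb x y a b c = lincomb x y a' b' c'"
  by simp

lemma span_one_pair_lincomb: "z \<in> span {one, x, y} \<Longrightarrow> \<exists>a b c. z = lincomb x y a b c"
  by (auto simp: span_insert span_singleton lincomb_def algebra_simps)

lemma lincomb_mult_left:
  "lincomb x y a b c \<odot> w = a *s (one \<odot> w) + b *s (x \<odot> w) + c *s (y \<odot> w)"
  by (simp add: lincomb_def mult_add_left mult_scale_left)

lemma lincomb_mult_right:
  "w \<odot> lincomb x y a b c = a *s (w \<odot> one) + b *s (w \<odot> x) + c *s (w \<odot> y)"
  by (simp add: lincomb_def mult_add_right mult_scale_right)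

lemma lincomb_mult:
  assumes xx: "x \<odot> x = A *s one" and yy: "y \<odot> y = B *s one"
    and xy: "x \<odot> y = lincomb x y \<alpha> \<beta> \<gamma>" and yx: "y \<odot> x = lincomb x y \<alpha> (- \<beta>) (- \<gamma>)"
  shows "lincomb x y l p q \<odot> lincomb x y m r t =
    lincomb x y (l*m + p*r*A + q*t*B + (p*t + q*r)*\<alpha>)
      (l*r + m*p + (p*t - q*r)*\<beta>) (l*t + m*q + (p*t - q*r)*\<gamma>)"
proof -
  have products: "one \<odot> one = lincomb x y 1 0 0"
    "one \<odot> x = lincomb x y 0 1 0" "x \<odot> one = lincomb x y 0 1 0"
    "one \<odot> y = lincomb x y 0 0 1" "y \<odot> one = lincomb x y 0 0 1"
    "x \<odot> x = lincomb x y A 0 0" "y \<odot> y = lincomb x y B 0 0"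
    using xx yy by (simp_all add: lincomb_def one_mult mult_one)
  show ?thesis
    by (simp add: lincomb_mult_left lincomb_mult_right products xy yx lincomb_scale lincomb_add)
      (intro lincomb_cong; simp add: algebra_simps)
qed

lemma reversible_mult_commute:
  assumes rev: "reversible (\<odot>)" and two: "(2::'k) \<noteq> 0"
    and xx: "x \<odot> x = A *s one" and yy: "y \<odot> y = B *s one"
    and xy: "x \<odot> y = lincomb x y \<alpha> \<beta> \<gamma>" and yx: "y \<odot> x = lincomb x y \<alpha> (- \<beta>) (- \<gamma>)"
  shows "x \<odot> y = y \<odot> x"
proof -
  obtain p q r t
    where E: "(A - \<gamma>\<^sup>2)*p*r + (\<alpha> + \<beta>*\<gamma>)*(p*t + q*r) + (B - \<beta>\<^sup>2)*q*t = 0"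
      and D: "p*t - q*r \<noteq> 0"
    using binary_form_orthogonal_pair[OF two] by blast
  define u where "u = lincomb x y (\<beta>*q - \<gamma>*p) p q"
  define v where "v = lincomb x y (\<gamma>*r - \<beta>*t) r t"
  note product = lincomb_mult[OF xx yy xy yx]
  have "u \<odot> v = lincomb x y 0 0 0"
    unfolding u_def v_def product
    by (rule lincomb_cong) (use E in \<open>simp_all add: algebra_simps power2_eq_square\<close>)
  then have "v \<odot> u = 0"
    using rev by (simp add: reversible_def lincomb_def)
  moreover have "v \<odot> u = lincomb x y 0 (- 2*(p*t - q*r)*\<beta>) (- 2*(p*t - q*r)*\<gamma>)"
    unfolding u_def v_def product
    by (rule lincomb_cong) (use E in \<open>simp_all add: algebra_simps power2_eq_square\<close>)
  ultimately have "(- 2*(p*t - q*r)) *s (\<beta> *s x + \<gamma> *s y) = 0"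
    by (simp add: lincomb_def scale_right_distrib)
  then have "\<beta> *s x + \<gamma> *s y = 0"
    using two D by simp
  then show ?thesis
    using xy yx by (simp add: lincomb_def diff_diff_eq add.assoc)
qed

end

locale involutive_alg = unital_alg scale mult one
  for scale :: "'k::field \<Rightarrow> 'a::ab_group_add \<Rightarrow> 'a" (infixr "*s" 75)
    and mult :: "'a \<Rightarrow> 'a \<Rightarrow> 'a" (infixl "\<odot>" 70) and one :: 'a +
  fixes bar :: "'a \<Rightarrow> 'a"
  assumes bar_add: "bar (x + y) = bar x + bar y"
    and bar_scale: "bar (c *s x) = c *s bar x"
    and bar_mult: "bar (x \<odot> y) = bar y \<odot> bar x"
    and bar_bar: "bar (bar x) = x"
    and add_bar: "\<exists>c. x + bar x = c *s one"
    and mult_bar: "\<exists>c. x \<odot> bar x = c *s one"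
begin

lemma bar_zero [simp]: "bar 0 = 0"
  using bar_add[of 0 0] by simp

lemma bar_minus: "bar (- x) = - bar x"
  using bar_add[of x "- x"] by (simp add: minus_unique)

lemma bar_diff: "bar (x - y) = bar x - bar y"
  by (simp only: diff_conv_add_uminus bar_add bar_minus)

lemma bar_one: "bar one = one"
proof -
  have "bar one \<odot> x = x" for x
    using bar_mult[of "bar x" one] by (simp add: bar_bar mult_one)
  from this[of one] show ?thesis by (simp add: mult_one)
qed

lemma bar_eq_trace_minus: "\<exists>t. bar x = t *s one - x"
  using add_bar[of x] by (metis add_diff_cancel_left')

lemma exists_skew_part:
  assumes two: "(2::'k) \<noteq> 0"
  shows "\<exists>c x'. x = c *s one + x' \<and> bar x' = - x'"
proof -
  obtain t where t: "bar x = t *s one - x"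
    using bar_eq_trace_minus by blast
  define x' where "x' = x - (t/2) *s one"
  have "bar x' = (t - t/2) *s one - x"
    by (simp add: x'_def bar_diff bar_scale bar_one t scale_left_diff_distrib)
  also have "t - t/2 = t/2"
    using two by (simp add: field_simps)
  finally have "bar x' = - x'"
    by (simp add: x'_def)
  then show ?thesis
    by (metis x'_def add_diff_cancel_left' diff_add_cancel add.commute)
qed

lemma skew_mult_self: "bar x = - x \<Longrightarrow> \<exists>A. x \<odot> x = A *s one"
  using mult_bar[of x] by (metis mult_minus_right minus_minus scale_minus_left)

lemma bar_mult_skew: "bar x = - x \<Longrightarrow> bar y = - y \<Longrightarrow> bar (x \<odot> y) = y \<odot> x"
  by (simp add: bar_mult mult_minus_left mult_minus_right)

lemma bar_lincomb_skew:
  "bar x = - x \<Longrightarrow> bar y = - y \<Longrightarrow> bar (lincomb x y a b c) = lincomb x y a (- b) (- c)"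
  by (simp add: lincomb_def bar_add bar_scale bar_one)

lemma reversible_skew_mult_commute:
  assumes rev: "reversible (\<odot>)" and two: "(2::'k) \<noteq> 0"
    and "bar x = - x" and "bar y = - y" and "x \<odot> y \<in> span {one, x, y}"
  shows "x \<odot> y = y \<odot> x"
proof -
  obtain \<alpha> \<beta> \<gamma> where xy: "x \<odot> y = lincomb x y \<alpha> \<beta> \<gamma>"
    using span_one_pair_lincomb assms by blast
  then have yx: "y \<odot> x = lincomb x y \<alpha> (- \<beta>) (- \<gamma>)"
    using bar_mult_skew bar_lincomb_skew assms by metis
  obtain A B where "x \<odot> x = A *s one" and "y \<odot> y = B *s one"
    using skew_mult_self assms by metis
  then show ?thesis
    using reversible_mult_commute[OF rev two _ _ xy yx] by blast
qed

lemma mult_self_in_span: "x \<odot> x \<in> span {one, x}"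
proof -
  obtain t where t: "bar x = t *s one - x"
    using bar_eq_trace_minus by blast
  obtain n where "x \<odot> bar x = n *s one"
    using mult_bar by blast
  then have "x \<odot> x = t *s x - n *s one"
    by (simp add: t bilinear_simps algebra_simps)
  then show ?thesis
    by (simp add: span_diff span_scale span_base)
qed

lemma mult_add_mult_in_span: "x \<odot> y + y \<odot> x \<in> span {one, x, y}"
proof -
  have squares: "z \<odot> z \<in> span {one, x, y}" if "z \<in> span {one, x, y}" for z
  proof -
    have "span {one, z} \<subseteq> span {one, x, y}"
      using that by (intro span_minimal) (auto intro: span_base)
    then show ?thesis using mult_self_in_span by blast
  qed
  have "x \<odot> y + y \<odot> x = (x + y) \<odot> (x + y) - x \<odot> x - y \<odot> y"
    by (simp add: bilinear_simps algebra_simps)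
  then show ?thesis
    by (simp add: squares span_diff span_add span_base)
qed

lemma subalgebra_span_one_pair:
  assumes "x \<odot> y \<in> span {one, x, y}"
  shows "subalgebra scale (\<odot>) one (span {one, x, y})"
proof -
  have "y \<odot> x = (x \<odot> y + y \<odot> x) - x \<odot> y"
    by simp
  then have "y \<odot> x \<in> span {one, x, y}"
    using assms mult_add_mult_in_span by (metis span_diff)
  moreover have "x \<odot> x \<in> span {one, x, y}" "y \<odot> y \<in> span {one, x, y}"
    using mult_self_in_span span_mono[of "{one, x}" "{one, x, y}"]
      span_mono[of "{one, y}" "{one, x, y}"] by auto
  ultimately have "\<forall>e\<in>{one, x, y}. \<forall>f\<in>{one, x, y}. e \<odot> f \<in> span {one, x, y}"
    using assms by (auto simp: one_mult mult_one span_base)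
  then show ?thesis
    unfolding subalgebra_def by (auto intro: span_mult_closed span_base)
qed

lemma reversible_imp_dim3_commutative:
  assumes rev: "reversible (\<odot>)" and two: "(2::'k) \<noteq> 0"
    and B: "subalgebra scale (\<odot>) one B" and dim: "dim B = 3"
  shows "commutative_on (\<odot>) B"
  unfolding commutative_on_def
proof (intro ballI)
  fix p q assume "p \<in> B" "q \<in> B"
  have sub: "subspace B" and closed: "\<forall>x\<in>B. \<forall>y\<in>B. x \<odot> y \<in> B" and "one \<in> B"
    using B by (simp_all add: subalgebra_def)
  obtain c x d y where p: "p = c *s one + x" and x_skew: "bar x = - x"
    and q: "q = d *s one + y" and y_skew: "bar y = - y"
    using exists_skew_part[OF two] by metis
  have "x \<in> B" "y \<in> B"
    using p q \<open>p \<in> B\<close> \<open>q \<in> B\<close> \<open>one \<in> B\<close> sub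
    by (metis add_diff_cancel_left' subspace_diff subspace_scale)+
  have "x \<odot> y = y \<odot> x"
  proof (cases "x \<in> span {one} \<or> y \<in> span {one, x}")
    case True
    then show ?thesis by (rule mult_commute_if_dependent)
  next
    case False
    then have "independent {one, x, y}" "card {one, x, y} = 3"
      using independent_one_pair by blast+
    then have "B \<subseteq> span {one, x, y}"
      using \<open>x \<in> B\<close> \<open>y \<in> B\<close> \<open>one \<in> B\<close> dim by (intro subset_span_if_card_eq_dim) auto
    then have "x \<odot> y \<in> span {one, x, y}"
      using closed \<open>x \<in> B\<close> \<open>y \<in> B\<close> by blast
    then show ?thesis
      using reversible_skew_mult_commute[OF rev two x_skew y_skew] by blast
  qed
  then show "p \<odot> q = q \<odot> p"
    unfolding p q by (rule mult_commute_add_scalars)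
qed

lemma dim3_commutative_imp_reversible:
  assumes comm: "\<forall>B. subalgebra scale (\<odot>) one B \<and> dim B = 3 \<longrightarrow> commutative_on (\<odot>) B"
  shows "reversible (\<odot>)"
  unfolding reversible_def
proof (intro allI impI)
  fix x y assume xy: "x \<odot> y = 0"
  have "x \<odot> y = y \<odot> x"
  proof (cases "x \<in> span {one} \<or> y \<in> span {one, x}")
    case True
    then show ?thesis by (rule mult_commute_if_dependent)
  next
    case False
    then have "dim (span {one, x, y}) = 3"
      using independent_one_pair dim_span_eq_card_independent by metis
    moreover have "subalgebra scale (\<odot>) one (span {one, x, y})"
      using xy by (simp add: subalgebra_span_one_pair span_zero)
    ultimately have "commutative_on (\<odot>) (span {one, x, y})"
      using comm by blast
    then show ?thesis
      by (simp add: commutative_on_def span_base)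
  qed
  with xy show "y \<odot> x = 0" by simp
qed

end

theorem proposition4p9:
  fixes scale :: "'k::field \<Rightarrow> 'a::ab_group_add \<Rightarrow> 'a"
    and mult :: "'a \<Rightarrow> 'a \<Rightarrow> 'a"
    and one :: 'a
  assumes char: "(2::'k) \<noteq> 0"
    and inv: "involutive_algebra scale mult one"
  shows "reversible mult \<longleftrightarrow>
    (\<forall>B. subalgebra scale mult one B \<and> Vector_Spaces.vector_space.dim scale B = 3
         \<longrightarrow> commutative_on mult B)"
proof -
  obtain bar where "unital_algebra scale mult one" and "is_involution scale mult one bar"
    using inv unfolding involutive_algebra_def by blast
  then interpret involutive_alg scale mult one bar
    unfolding unital_algebra_def is_involution_def involutive_alg_def involutive_alg_axioms_def
      unital_alg_def unital_alg_axioms_def by auto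
  show ?thesis
    using reversible_imp_dim3_commutative[OF _ char] dim3_commutative_imp_reversible by blast
qed

end
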